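(* In the whitened Gaussian spiked model (context), condition on the event $\mathcal{E}$. Let $S_{\mathbf{v}}^{(t)}\subset[n]$ with $|S_{\mathbf{v}}^{(t)}|\le k_{\mathbf{v}}$, let $\hat{\mathbf{v}}^{(t)}$ be a unit vector supported on $S_{\mathbf{v}}^{(t)}$, let $\mathbf{r}_{\mathbf{u}}=\widehat{\boldsymbol{\Sigma}}_{xy}\hat{\mathbf{v}}^{(t)}$, and let $S_{\mathbf{u}}^{(t+1)}$ be the index set of the $p$ largest entries of $|\mathbf{r}_{\mathbf{u}}|$, where $p\le k_{\mathbf{u}}$. Then, for a constant $C>0$ determined by the constants of the event $\mathcal{E}$, $$\|\mathbf{u}_{S_{\mathbf{u}}^{(t+1)}}\|_2\ge\sqrt{\frac{1}{s_{\mathbf{u}}(|S_{\mathbf{u}}^{(t+1)}|)}}-\frac{2C(1+\rho)}{\rho|\langle\mathbf{v},\hat{\mathbf{v}}^{(t)}\rangle|}\sqrt{\frac{(|S_{\mathbf{u}}^{(t+1)}|+|S_{\mathbf{v}}^{(t)}|)\log n}{m}}.$$ Symmetrically, if $\hat{\mathbf{u}}^{(t)}$ is a unit vector supported on $S_{\mathbf{u}}^{(t)}$ with $|S_{\mathbf{u}}^{(t)}|\le k_{\mathbf{u}}$, $\mathbf{r}_{\mathbf{v}}=\widehat{\boldsymbol{\Sigma}}_{xy}^\top\hat{\mathbf{u}}^{(t)}$, and $S_{\mathbf{v}}^{(t+1)}$ is the index set of the $q\le k_{\mathbf{v}}$ largest entries of $|\mathbf{r}_{\mathbf{v}}|$,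 then $$\|\mathbf{v}_{S_{\mathbf{v}}^{(t+1)}}\|_2\ge\sqrt{\frac{1}{s_{\mathbf{v}}(|S_{\mathbf{v}}^{(t+1)}|)}}-\frac{2C(1+\rho)}{\rho|\langle\mathbf{u},\hat{\mathbf{u}}^{(t)}\rangle|}\sqrt{\frac{(|S_{\mathbf{u}}^{(t)}|+|S_{\mathbf{v}}^{(t+1)}|)\log n}{m}}.$$
   Context: Model: $m$ i.i.d. samples $(\mathbf{x}_i,\mathbf{y}_i)$ from a zero-mean jointly Gaussian law on $\mathbb{R}^n\times\mathbb{R}^n$ with $\boldsymbol{\Sigma}_{xx}=\boldsymbol{\Sigma}_{yy}=\mathbf{I}_n$, $\boldsymbol{\Sigma}_{xy}=\rho\mathbf{u}\mathbf{v}^\top$, $\rho\in(0,1)$, $\|\mathbf{u}\|_2=\|\mathbf{v}\|_2=1$, $\|\mathbf{u}\|_0\le k_{\mathbf{u}}$, $\|\mathbf{v}\|_0\le k_{\mathbf{v}}$. $\widehat{\boldsymbol{\Sigma}}_{xy}=\frac1m\sum_i\mathbf{x}_i\mathbf{y}_i^\top$, $\mathbf{W}=\widehat{\boldsymbol{\Sigma}}_{xy}-\rho\mathbf{u}\mathbf{v}^\top$. Event $\mathcal{E}$: for all $S_1,S_2\subset[n]$ with $|S_1|\le k_{\mathbf{u}}$, $|S_2|\le k_{\mathbf{v}}$, $\|\mathbf{W}_{S_1,S_2}\|_2\le C'\sqrt{((|S_1|+|S_2|)\log n+c'\log n)/m}$ for fixed constants $C',c'>0$ (submatrix, spectral norm).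 $\mathbf{x}_S$ is the subvector on $S$. Structure functions: $s_{\mathbf{u}}(p)=(\sum_{i=1}^pu_{(i)}^2)^{-1}$, $s_{\mathbf{v}}(q)=(\sum_{j=1}^qv_{(j)}^2)^{-1}$, where $u_{(i)}$ is the $i$-th largest entry of $\mathbf{u}$ in absolute value. *)

theory Defs
  imports Complex_Main
begin

text \<open>Vectors in R^n are functions nat => real, indexed by {..<n}; matrices are
  nat => nat => real indexed by {..<n} x {..<n}.\<close>

definition supported_in :: "nat set \<Rightarrow> (nat \<Rightarrow> real) \<Rightarrow> bool" where
  "supported_in S x \<longleftrightarrow> (\<forall>i. i \<notin> S \<longrightarrow> x i = 0)"

definition sub_norm :: "nat set \<Rightarrow> (nat \<Rightarrow> real) \<Rightarrow> real" where
  "sub_norm S x = sqrt (\<Sum>i\<in>S. (x i)\<^sup>2)"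

definition l0 :: "nat \<Rightarrow> (nat \<Rightarrow> real) \<Rightarrow> nat" where
  "l0 n x = card {i\<in>{..<n}. x i \<noteq> 0}"

definition inner_n :: "nat \<Rightarrow> (nat \<Rightarrow> real) \<Rightarrow> (nat \<Rightarrow> real) \<Rightarrow> real" where
  "inner_n n x y = (\<Sum>i<n. x i * y i)"

text \<open>Sample cross-covariance (1/m) sum_l x_l y_l^T, X l and Y l being the l-th samples.\<close>
definition sample_cross_cov ::
  "nat \<Rightarrow> (nat \<Rightarrow> nat \<Rightarrow> real) \<Rightarrow> (nat \<Rightarrow> nat \<Rightarrow> real) \<Rightarrow> nat \<Rightarrow> nat \<Rightarrow> real" where
  "sample_cross_cov m X Y i j = (1 / real m) * (\<Sum>l<m. X l i * Y l j)"

definition sub_spec_norm :: "(nat \<Rightarrow> nat \<Rightarrow> real) \<Rightarrow> nat set \<Rightarrow> nat set \<Rightarrow> real" where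
  "sub_spec_norm A S1 S2 =
     (SUP z \<in> {z. (\<Sum>j\<in>S2. (z j)\<^sup>2) \<le> 1}. sqrt (\<Sum>i\<in>S1. (\<Sum>j\<in>S2. A i j * z j)\<^sup>2))"

definition top_sq_sum :: "nat \<Rightarrow> (nat \<Rightarrow> real) \<Rightarrow> nat \<Rightarrow> real" where
  "top_sq_sum n x p = (\<Sum>a \<leftarrow> take p (rev (sort (map (\<lambda>i. \<bar>x i\<bar>) [0..<n]))). a\<^sup>2)"

definition struct_fun :: "nat \<Rightarrow> (nat \<Rightarrow> real) \<Rightarrow> nat \<Rightarrow> real" where
  "struct_fun n x p = 1 / top_sq_sum n x p"

text \<open>S is an index set of the p largest entries of |r| (ties broken arbitrarily).\<close>
definition is_top_set :: "nat \<Rightarrow> (nat \<Rightarrow> real) \<Rightarrow> nat \<Rightarrow> nat set \<Rightarrow> bool" where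
  "is_top_set n r p S \<longleftrightarrow> S \<subseteq> {..<n} \<and> card S = p \<and>
     (\<forall>i\<in>S. \<forall>j\<in>{..<n} - S. \<bar>r j\<bar> \<le> \<bar>r i\<bar>)"

definition spiked_params ::
  "nat \<Rightarrow> real \<Rightarrow> (nat \<Rightarrow> real) \<Rightarrow> (nat \<Rightarrow> real) \<Rightarrow> nat \<Rightarrow> nat \<Rightarrow> bool" where
  "spiked_params n \<rho> u v ku kv \<longleftrightarrow>
     0 < \<rho> \<and> \<rho> < 1 \<and> supported_in {..<n} u \<and> supported_in {..<n} v \<and>
     sub_norm {..<n} u = 1 \<and> sub_norm {..<n} v = 1 \<and> l0 n u \<le> ku \<and> l0 n v \<le> kv"

definition event_E ::
  "real \<Rightarrow> real \<Rightarrow> nat \<Rightarrow> nat \<Rightarrow> (nat \<Rightarrow> nat \<Rightarrow> real) \<Rightarrow> real \<Rightarrow> (nat \<Rightarrow> real) \<Rightarrow> (nat \<Rightarrow> real)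
    \<Rightarrow> nat \<Rightarrow> nat \<Rightarrow> bool" where
  "event_E C' c' n m Sxy \<rho> u v ku kv \<longleftrightarrow>
     (\<forall>S1 S2. S1 \<subseteq> {..<n} \<and> S2 \<subseteq> {..<n} \<and> card S1 \<le> ku \<and> card S2 \<le> kv \<longrightarrow>
        sub_spec_norm (\<lambda>i j. Sxy i j - \<rho> * u i * v j) S1 S2
          \<le> C' * sqrt (((real (card S1) + real (card S2)) * ln (real n) + c' * ln (real n)) / real m))"

end

theory Submission imports Defs "HOL-Analysis.L2_Norm" begin

text \<open>Write the vector to be thresholded as r = Sigma_xy vhat = alpha u + w with alpha = rho <v, vhat>
  and noise w = W vhat. On the event E, the restriction of w to any index set of size p has norm at
  most C sqrt ((p + |S_v|) log n / m). The top-p set S of |r| carries at least as much energy of r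
  as the set T of the p largest entries of |u|, so the triangle inequality gives
  |alpha| |u_T| <= |alpha| |u_S| + |w_S| + |w_T|, while |u_T|^2 = 1 / s_u(p). The bound for v is the same statement for the transposed
  matrix, because the spectral norm of a submatrix is invariant under transposition.\<close>

lemma sub_norm_eq_L2_set: "sub_norm S x = L2_set x S"
  unfolding sub_norm_def L2_set_def ..

lemma abs_sum_mult_le_L2_set: "\<bar>\<Sum>j\<in>S. a j * z j\<bar> \<le> L2_set a S * L2_set z S"
proof -
  have "\<bar>\<Sum>j\<in>S. a j * z j\<bar> \<le> (\<Sum>j\<in>S. \<bar>a j\<bar> * \<bar>z j\<bar>)"
    by (metis (no_types, lifting) abs_mult sum.cong sum_abs)
  also have "\<dots> \<le> L2_set a S * L2_set z S" by (rule L2_set_mult_ineq)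
  finally show ?thesis .
qed

lemma L2_set_scale: "L2_set (\<lambda>i. \<alpha> * x i) S = \<bar>\<alpha>\<bar> * L2_set x S"
  unfolding L2_set_def by (simp add: power_mult_distrib real_sqrt_mult flip: sum_distrib_left)

lemma map_insort_key: "map f (insort_key f x xs) = insort (f x) (map f xs)"
  by (induct xs) auto

lemma map_sort_key: "map f (sort_key f xs) = sort (map f xs)"
  by (induct xs) (auto simp: map_insort_key)

lemma top_sq_sum_attained:
  assumes "p \<le> n"
  obtains T where "T \<subseteq> {..<n}" "card T = p" "top_sq_sum n x p = (\<Sum>i\<in>T. (x i)\<^sup>2)"
proof -
  define L where "L = rev (sort_key (\<lambda>i. \<bar>x i\<bar>) [0..<n])"
  have sorted_abs: "rev (sort (map (\<lambda>i. \<bar>x i\<bar>) [0..<n])) = map (\<lambda>i. \<bar>x i\<bar>) L"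
    unfolding L_def by (metis map_sort_key rev_map)
  have distinct: "distinct (take p L)" and length: "length L = n"
    unfolding L_def by simp_all
  have "top_sq_sum n x p = sum_list (map (\<lambda>i. (x i)\<^sup>2) (take p L))"
    unfolding top_sq_sum_def sorted_abs by (simp add: take_map comp_def)
  also have "\<dots> = (\<Sum>i\<in>set (take p L). (x i)\<^sup>2)"
    using distinct by (rule sum_list_distinct_conv_sum_set)
  moreover have "set (take p L) \<subseteq> {..<n}"
    using set_take_subset[of p L] unfolding L_def by auto
  ultimately show ?thesis
    using that distinct_card[OF distinct] length assms by simp
qed

lemma L2_set_le_top_set:
  assumes top: "is_top_set n r p S" and T: "T \<subseteq> {..<n}" "card T = p"
  shows "L2_set r T \<le> L2_set r S"
proof -
  have S: "S \<subseteq> {..<n}" "card S = p" and dom: "\<forall>i\<in>S. \<forall>j\<in>{..<n} - S. \<bar>r j\<bar> \<le> \<bar>r i\<bar>"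
    using top unfolding is_top_set_def by auto
  have fin: "finite S" "finite T" using S T finite_subset by blast+
  have "card (T - S) = card (S - T)"
    using fin S T by (simp add: card_Diff_subset_Int Int_commute)
  then obtain f where f: "bij_betw f (T - S) (S - T)"
    using finite_same_card_bij fin by blast
  have "(\<Sum>i\<in>T - S. (r i)\<^sup>2) \<le> (\<Sum>i\<in>T - S. (r (f i))\<^sup>2)"
  proof (rule sum_mono)
    fix i assume i: "i \<in> T - S"
    then have "f i \<in> S" using f bij_betwE by blast
    moreover have "i \<in> {..<n} - S" using i T by auto
    ultimately show "(r i)\<^sup>2 \<le> (r (f i))\<^sup>2" using dom abs_le_square_iff by blast
  qed
  also have "\<dots> = (\<Sum>i\<in>S - T. (r i)\<^sup>2)"
    using sum.reindex_bij_betw[OF f, of "\<lambda>i. (r i)\<^sup>2"] by simp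
  finally have "(\<Sum>i\<in>T - S. (r i)\<^sup>2) \<le> (\<Sum>i\<in>S - T. (r i)\<^sup>2)" .
  then have "(\<Sum>i\<in>T. (r i)\<^sup>2) \<le> (\<Sum>i\<in>S. (r i)\<^sup>2)"
    using fin by (simp add: sum.Int_Diff[of T _ S] sum.Int_Diff[of S _ T] Int_commute)
  then show ?thesis unfolding L2_set_def by simp
qed

lemma L2_set_top_set_of_perturbation:
  assumes top: "is_top_set n r p S" and T: "T \<subseteq> {..<n}" "card T = p"
    and r: "\<And>i. r i = \<alpha> * x i + w i"
  shows "\<bar>\<alpha>\<bar> * L2_set x T \<le> \<bar>\<alpha>\<bar> * L2_set x S + L2_set w S + L2_set w T"
proof -
  have r_eq: "r = (\<lambda>i. \<alpha> * x i + w i)" using r by blast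
  have "\<bar>\<alpha>\<bar> * L2_set x T = L2_set (\<lambda>i. r i + - w i) T"
    by (simp add: r flip: L2_set_scale)
  also have "\<dots> \<le> L2_set r T + L2_set w T"
    using L2_set_triangle_ineq[of r "\<lambda>i. - w i" T] by (simp add: L2_set_def)
  also have "L2_set r T \<le> L2_set r S"
    by (rule L2_set_le_top_set[OF top T])
  also have "L2_set r S \<le> \<bar>\<alpha>\<bar> * L2_set x S + L2_set w S"
    using L2_set_triangle_ineq[of "\<lambda>i. \<alpha> * x i" w S] by (simp add: r_eq L2_set_scale)
  finally show ?thesis by simp
qed

lemma sqrt_top_sq_sum_le_top_set:
  assumes top: "is_top_set n r p S" and r: "\<And>i. r i = \<alpha> * x i + w i" and "\<alpha> \<noteq> 0"
    and noise: "\<And>T. T \<subseteq> {..<n} \<Longrightarrow> card T = p \<Longrightarrow> L2_set w T \<le> B"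
  shows "sqrt (top_sq_sum n x p) - 2 * B / \<bar>\<alpha>\<bar> \<le> L2_set x S"
proof -
  have S: "S \<subseteq> {..<n}" "card S = p" using top unfolding is_top_set_def by auto
  then have "p \<le> n" by (metis card_lessThan card_mono finite_lessThan)
  then obtain T where T: "T \<subseteq> {..<n}" "card T = p" "top_sq_sum n x p = (\<Sum>i\<in>T. (x i)\<^sup>2)"
    by (rule top_sq_sum_attained)
  have "\<bar>\<alpha>\<bar> * L2_set x T \<le> \<bar>\<alpha>\<bar> * L2_set x S + 2 * B"
    using L2_set_top_set_of_perturbation[OF top T(1,2) r] noise[OF S] noise[OF T(1,2)] by linarith
  then have "L2_set x T - 2 * B / \<bar>\<alpha>\<bar> \<le> L2_set x S"
    using \<open>\<alpha> \<noteq> 0\<close> by (simp add: field_simps)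
  then show ?thesis using T(3) unfolding L2_set_def by simp
qed

lemma sub_spec_norm_bdd_above:
  fixes A :: "nat \<Rightarrow> nat \<Rightarrow> real"
  shows "bdd_above ((\<lambda>z. sqrt (\<Sum>i\<in>S1. (\<Sum>j\<in>S2. A i j * z j)\<^sup>2)) ` {z. (\<Sum>j\<in>S2. (z j)\<^sup>2) \<le> 1})"
proof (rule bdd_aboveI2)
  fix z :: "nat \<Rightarrow> real" assume "z \<in> {z. (\<Sum>j\<in>S2. (z j)\<^sup>2) \<le> 1}"
  then have z: "L2_set z S2 \<le> 1" unfolding L2_set_def by simp
  have "(\<Sum>j\<in>S2. A i j * z j)\<^sup>2 \<le> (L2_set (A i) S2)\<^sup>2" for i
  proof -
    have "\<bar>\<Sum>j\<in>S2. A i j * z j\<bar> \<le> L2_set (A i) S2 * L2_set z S2"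
      by (rule abs_sum_mult_le_L2_set)
    also have "\<dots> \<le> L2_set (A i) S2" using z by (simp add: mult_left_le)
    finally show ?thesis by (metis abs_le_square_iff abs_of_nonneg L2_set_nonneg)
  qed
  then show "sqrt (\<Sum>i\<in>S1. (\<Sum>j\<in>S2. A i j * z j)\<^sup>2) \<le> sqrt (\<Sum>i\<in>S1. (L2_set (A i) S2)\<^sup>2)"
    by (simp add: sum_mono)
qed

lemma sub_spec_norm_upper:
  assumes "(\<Sum>j\<in>S2. (z j)\<^sup>2) \<le> 1"
  shows "L2_set (\<lambda>i. \<Sum>j\<in>S2. A i j * z j) S1 \<le> sub_spec_norm A S1 S2"
  unfolding sub_spec_norm_def L2_set_def
  by (rule cSUP_upper[OF _ sub_spec_norm_bdd_above]) (use assms in simp)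

lemma sub_spec_norm_nonneg: "0 \<le> sub_spec_norm A S1 S2"
  using sub_spec_norm_upper[of "\<lambda>_. 0" S2 A S1] by (simp add: L2_set_def)

lemma L2_set_mult_le_sub_spec_norm:
  assumes "finite S2"
  shows "L2_set (\<lambda>i. \<Sum>j\<in>S2. A i j * y j) S1 \<le> sub_spec_norm A S1 S2 * L2_set y S2"
proof (cases "L2_set y S2 = 0")
  case True
  then have "\<forall>j\<in>S2. y j = 0" using L2_set_eq_0_iff[OF assms] by blast
  then show ?thesis using True by (simp add: L2_set_def)
next
  case False
  define c where "c = L2_set y S2"
  have c: "c > 0" using False L2_set_nonneg[of y S2] unfolding c_def by linarith
  have "(\<Sum>j\<in>S2. (y j / c)\<^sup>2) = (\<Sum>j\<in>S2. (y j)\<^sup>2) / c\<^sup>2"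
    by (simp add: power_divide sum_divide_distrib)
  also have "(\<Sum>j\<in>S2. (y j)\<^sup>2) = c\<^sup>2" unfolding c_def L2_set_def
    by (simp add: sum_nonneg)
  finally have "(\<Sum>j\<in>S2. (y j / c)\<^sup>2) \<le> 1" using c by simp
  then have "L2_set (\<lambda>i. \<Sum>j\<in>S2. A i j * (y j / c)) S1 \<le> sub_spec_norm A S1 S2"
    by (rule sub_spec_norm_upper)
  moreover have "L2_set (\<lambda>i. \<Sum>j\<in>S2. A i j * (y j / c)) S1
      = L2_set (\<lambda>i. \<Sum>j\<in>S2. A i j * y j) S1 / c"
    using c unfolding L2_set_def
    by (simp add: power_divide real_sqrt_divide flip: sum_divide_distrib)
  ultimately show ?thesis using c unfolding c_def by (simp add: divide_le_eq)
qed

lemma L2_set_transpose_mult_le_sub_spec_norm: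
  assumes "finite S2"
  shows "L2_set (\<lambda>j. \<Sum>i\<in>S1. A i j * z i) S2 \<le> sub_spec_norm A S1 S2 * L2_set z S1"
proof -
  define w where "w = (\<lambda>j. \<Sum>i\<in>S1. A i j * z i)"
  have "(L2_set w S2)\<^sup>2 = (\<Sum>j\<in>S2. w j * w j)"
    unfolding L2_set_def by (simp add: sum_nonneg power2_eq_square)
  also have "\<dots> = (\<Sum>j\<in>S2. \<Sum>i\<in>S1. A i j * z i * w j)"
    unfolding w_def by (simp add: sum_distrib_right)
  also have "\<dots> = (\<Sum>i\<in>S1. z i * (\<Sum>j\<in>S2. A i j * w j))"
    by (subst sum.swap) (simp add: sum_distrib_left mult_ac)
  also have "\<dots> \<le> L2_set z S1 * L2_set (\<lambda>i. \<Sum>j\<in>S2. A i j * w j) S1"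
    using abs_sum_mult_le_L2_set[of z "\<lambda>i. \<Sum>j\<in>S2. A i j * w j" S1] by linarith
  also have "\<dots> \<le> L2_set z S1 * (sub_spec_norm A S1 S2 * L2_set w S2)"
    by (rule mult_left_mono[OF L2_set_mult_le_sub_spec_norm[OF assms]]) simp
  finally have "(L2_set w S2)\<^sup>2 \<le> (sub_spec_norm A S1 S2 * L2_set z S1) * L2_set w S2"
    by (simp add: mult_ac)
  then have "L2_set w S2 \<le> sub_spec_norm A S1 S2 * L2_set z S1"
    using sub_spec_norm_nonneg[of A S1 S2] L2_set_nonneg[of w S2] L2_set_nonneg[of z S1]
    by (cases "L2_set w S2 = 0") (simp_all add: power2_eq_square)
  then show ?thesis unfolding w_def .
qed

lemma sub_spec_norm_transpose_le:
  assumes "finite S2"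
  shows "sub_spec_norm (\<lambda>j i. A i j) S2 S1 \<le> sub_spec_norm A S1 S2"
  unfolding sub_spec_norm_def[of "\<lambda>j i. A i j"]
proof (rule cSUP_least)
  have "(\<lambda>_. 0) \<in> {z. (\<Sum>i\<in>S1. (z i)\<^sup>2) \<le> (1::real)}" by simp
  then show "{z. (\<Sum>i\<in>S1. (z i)\<^sup>2) \<le> (1::real)} \<noteq> {}" by (metis empty_iff)
next
  fix z assume "z \<in> {z. (\<Sum>i\<in>S1. (z i)\<^sup>2) \<le> (1::real)}"
  then have z: "L2_set z S1 \<le> 1" unfolding L2_set_def by simp
  have "L2_set (\<lambda>j. \<Sum>i\<in>S1. A i j * z i) S2 \<le> sub_spec_norm A S1 S2 * L2_set z S1"
    by (rule L2_set_transpose_mult_le_sub_spec_norm[OF assms])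
  also have "\<dots> \<le> sub_spec_norm A S1 S2"
    using z sub_spec_norm_nonneg[of A S1 S2] by (simp add: mult_left_le)
  finally show "sqrt (\<Sum>j\<in>S2. (\<Sum>i\<in>S1. A i j * z i)\<^sup>2) \<le> sub_spec_norm A S1 S2"
    by (simp only: L2_set_def)
qed

lemma sub_spec_norm_transpose:
  assumes "finite S1" "finite S2"
  shows "sub_spec_norm (\<lambda>j i. A i j) S2 S1 = sub_spec_norm A S1 S2"
  using sub_spec_norm_transpose_le[OF assms(2), of A S1]
    sub_spec_norm_transpose_le[OF assms(1), of "\<lambda>j i. A i j" S2]
  by simp

lemma event_E_transpose:
  assumes "event_E C' c' n m A \<rho> u v ku kv"
  shows "event_E C' c' n m (\<lambda>j i. A i j) \<rho> v u kv ku"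
  unfolding event_E_def
proof (intro allI impI)
  fix S1 S2 assume S: "S1 \<subseteq> {..<n} \<and> S2 \<subseteq> {..<n} \<and> card S1 \<le> kv \<and> card S2 \<le> ku"
  then have "finite S1" "finite S2" by (meson finite_lessThan finite_subset)+
  have "sub_spec_norm (\<lambda>i j. A j i - \<rho> * v i * u j) S1 S2
      = sub_spec_norm (\<lambda>i j. A i j - \<rho> * u i * v j) S2 S1"
    using sub_spec_norm_transpose[OF \<open>finite S2\<close> \<open>finite S1\<close>, of "\<lambda>i j. A i j - \<rho> * u i * v j"]
    by (simp add: mult_ac)
  also have "\<dots> \<le> C' * sqrt (((real (card S2) + real (card S1)) * ln (real n) + c' * ln (real n)) / real m)"
    using assms S unfolding event_E_def by simp
  finally show "sub_spec_norm (\<lambda>i j. A j i - \<rho> * v i * u j) S1 S2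
      \<le> C' * sqrt (((real (card S1) + real (card S2)) * ln (real n) + c' * ln (real n)) / real m)"
    by (simp add: add.commute)
qed

lemma sqrt_add_le_mult_sqrt:
  fixes a L m c' :: real
  assumes "1 \<le> a" "0 \<le> L" "0 \<le> c'" "0 \<le> m"
  shows "sqrt ((a * L + c' * L) / m) \<le> sqrt (1 + c') * sqrt (a * L / m)"
proof -
  have "c' * L \<le> c' * (a * L)"
    using assms by (intro mult_left_mono) (auto simp: mult_right_mono[of 1 a L, simplified])
  then have "(a * L + c' * L) / m \<le> (1 + c') * (a * L / m)"
    using assms by (simp add: divide_right_mono algebra_simps flip: add_divide_distrib)
  then show ?thesis
    by (simp add: real_sqrt_mult[symmetric])
qed

lemma ln_of_nat_nonneg: "0 \<le> ln (real n)"
  by (cases "n = 0") auto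

lemma event_E_sub_spec_norm_le:
  assumes "event_E C' c' n m A \<rho> u v ku kv" "0 \<le> C'" "0 \<le> c'"
    and "S1 \<subseteq> {..<n}" "S2 \<subseteq> {..<n}" "card S1 \<le> ku" "card S2 \<le> kv" "1 \<le> card S1 + card S2"
  shows "sub_spec_norm (\<lambda>i j. A i j - \<rho> * u i * v j) S1 S2
    \<le> C' * sqrt (1 + c') * sqrt ((real (card S1) + real (card S2)) * ln (real n) / real m)"
proof -
  have "sub_spec_norm (\<lambda>i j. A i j - \<rho> * u i * v j) S1 S2
      \<le> C' * sqrt (((real (card S1) + real (card S2)) * ln (real n) + c' * ln (real n)) / real m)"
    using assms unfolding event_E_def by blast
  also have "\<dots> \<le> C' * (sqrt (1 + c') * sqrt ((real (card S1) + real (card S2)) * ln (real n) / real m))"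
    using assms ln_of_nat_nonneg by (intro mult_left_mono sqrt_add_le_mult_sqrt) auto
  finally show ?thesis by (simp add: mult.assoc)
qed

lemma cross_cov_apply_decomposition:
  assumes "Sv \<subseteq> {..<n}" "supported_in Sv vhat"
  shows "(\<Sum>j<n. A i j * vhat j)
    = \<rho> * inner_n n v vhat * u i + (\<Sum>j\<in>Sv. (A i j - \<rho> * u i * v j) * vhat j)"
proof -
  have "(\<Sum>j<n. A i j * vhat j) = (\<Sum>j<n. (A i j - \<rho> * u i * v j) * vhat j + \<rho> * u i * (v j * vhat j))"
    by (rule sum.cong) (auto simp: algebra_simps)
  also have "\<dots> = (\<Sum>j<n. (A i j - \<rho> * u i * v j) * vhat j) + \<rho> * u i * inner_n n v vhat"
    unfolding inner_n_def by (simp add: sum.distrib sum_distrib_left)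
  also have "(\<Sum>j<n. (A i j - \<rho> * u i * v j) * vhat j) = (\<Sum>j\<in>Sv. (A i j - \<rho> * u i * v j) * vhat j)"
    using assms unfolding supported_in_def by (intro sum.mono_neutral_right) auto
  finally show ?thesis by simp
qed

lemma sub_norm_top_set_ge:
  assumes "0 \<le> C'" "0 \<le> c'" "0 < \<rho>" and E: "event_E C' c' n m A \<rho> u v ku kv"
    and Sv: "Sv \<subseteq> {..<n}" "card Sv \<le> kv" "supported_in Sv vhat" "sub_norm Sv vhat = 1"
    and "inner_n n v vhat \<noteq> 0" "p \<le> ku"
    and top: "is_top_set n (\<lambda>i. \<Sum>j<n. A i j * vhat j) p Su"
  shows "sqrt (1 / struct_fun n u (card Su))
      - 2 * (C' * sqrt (1 + c')) * (1 + \<rho>) / (\<rho> * \<bar>inner_n n v vhat\<bar>)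
        * sqrt ((real (card Su) + real (card Sv)) * ln (real n) / real m)
    \<le> sub_norm Su u"
proof -
  define C where "C = C' * sqrt (1 + c')"
  define \<sigma> where "\<sigma> = sqrt ((real p + real (card Sv)) * ln (real n) / real m)"
  define \<alpha> where "\<alpha> = \<rho> * inner_n n v vhat"
  define w where "w = (\<lambda>i. \<Sum>j\<in>Sv. (A i j - \<rho> * u i * v j) * vhat j)"
  have card_Su: "card Su = p" using top unfolding is_top_set_def by simp
  have "finite Sv" using Sv(1) by (meson finite_lessThan finite_subset)
  moreover have "Sv \<noteq> {}" using Sv(4) unfolding sub_norm_def by auto
  ultimately have "1 \<le> card Sv" by (simp add: Suc_le_eq card_gt_0_iff)
  have "L2_set vhat Sv = 1" using Sv(4) by (simp add: sub_norm_eq_L2_set)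
  have noise: "L2_set w T \<le> C * \<sigma>" if T: "T \<subseteq> {..<n}" "card T = p" for T
  proof -
    have "L2_set w T \<le> sub_spec_norm (\<lambda>i j. A i j - \<rho> * u i * v j) T Sv * L2_set vhat Sv"
      unfolding w_def by (rule L2_set_mult_le_sub_spec_norm[OF \<open>finite Sv\<close>])
    also have "\<dots> \<le> C * \<sigma>"
      using event_E_sub_spec_norm_le[OF E \<open>0 \<le> C'\<close> \<open>0 \<le> c'\<close> T(1) Sv(1) _ Sv(2)]
        T(2) \<open>p \<le> ku\<close> \<open>1 \<le> card Sv\<close> \<open>L2_set vhat Sv = 1\<close>
      unfolding C_def \<sigma>_def by simp
    finally show ?thesis .
  qed
  have r: "(\<Sum>j<n. A i j * vhat j) = \<alpha> * u i + w i" for i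
    unfolding \<alpha>_def w_def by (rule cross_cov_apply_decomposition[OF Sv(1,3)])
  have "\<alpha> \<noteq> 0" and abs_\<alpha>: "\<bar>\<alpha>\<bar> = \<rho> * \<bar>inner_n n v vhat\<bar>"
    using \<open>0 < \<rho>\<close> \<open>inner_n n v vhat \<noteq> 0\<close> unfolding \<alpha>_def by (auto simp: abs_mult)
  have "sqrt (top_sq_sum n u p) - 2 * (C * \<sigma>) / \<bar>\<alpha>\<bar> \<le> L2_set u Su"
    by (rule sqrt_top_sq_sum_le_top_set[OF top r \<open>\<alpha> \<noteq> 0\<close> noise])
  moreover have "2 * (C * \<sigma>) / \<bar>\<alpha>\<bar> \<le> 2 * C * (1 + \<rho>) / (\<rho> * \<bar>inner_n n v vhat\<bar>) * \<sigma>"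
    \<comment> \<open>the factor \<open>1 + \<rho>\<close> of the statement is slack\<close>
  proof -
    have "0 \<le> C * \<sigma>" using \<open>0 \<le> C'\<close> \<open>0 \<le> c'\<close> ln_of_nat_nonneg[of n] unfolding C_def \<sigma>_def by simp
    then have "0 \<le> C * \<sigma> * \<rho>" using \<open>0 < \<rho>\<close> by simp
    then have "2 * (C * \<sigma>) \<le> 2 * C * (1 + \<rho>) * \<sigma>" by (simp add: algebra_simps)
    then show ?thesis
      using \<open>\<alpha> \<noteq> 0\<close> by (simp add: abs_\<alpha>[symmetric] divide_right_mono)
  qed
  ultimately show ?thesis
    unfolding struct_fun_def sub_norm_eq_L2_set card_Su C_def \<sigma>_def by simp
qed

theorem proposition4:
  fixes C' c' :: real
  assumes "C' > 0" and "c' > 0"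
  shows "\<exists>C>0. \<forall>(n::nat) (m::nat) (X::nat \<Rightarrow> nat \<Rightarrow> real) (Y::nat \<Rightarrow> nat \<Rightarrow> real)
            (\<rho>::real) (u::nat \<Rightarrow> real) (v::nat \<Rightarrow> real) (ku::nat) (kv::nat).
     m > 0 \<and> spiked_params n \<rho> u v ku kv \<and>
     event_E C' c' n m (sample_cross_cov m X Y) \<rho> u v ku kv \<longrightarrow>
     (\<forall>Sv vhat p Su.
        Sv \<subseteq> {..<n} \<and> card Sv \<le> kv \<and> supported_in Sv vhat \<and> sub_norm Sv vhat = 1 \<and>
        inner_n n v vhat \<noteq> 0 \<and> p \<le> ku \<and>
        is_top_set n (\<lambda>i. \<Sum>j<n. sample_cross_cov m X Y i j * vhat j) p Su \<longrightarrow>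
        sub_norm Su u \<ge> sqrt (1 / struct_fun n u (card Su))
          - 2 * C * (1 + \<rho>) / (\<rho> * \<bar>inner_n n v vhat\<bar>)
            * sqrt ((real (card Su) + real (card Sv)) * ln (real n) / real m)) \<and>
     (\<forall>Su uhat q Sv.
        Su \<subseteq> {..<n} \<and> card Su \<le> ku \<and> supported_in Su uhat \<and> sub_norm Su uhat = 1 \<and>
        inner_n n u uhat \<noteq> 0 \<and> q \<le> kv \<and>
        is_top_set n (\<lambda>j. \<Sum>i<n. sample_cross_cov m X Y i j * uhat i) q Sv \<longrightarrow>
        sub_norm Sv v \<ge> sqrt (1 / struct_fun n v (card Sv))
          - 2 * C * (1 + \<rho>) / (\<rho> * \<bar>inner_n n u uhat\<bar>)
            * sqrt ((real (card Su) + real (card Sv)) * ln (real n) / real m))"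
proof (intro exI[of _ "C' * sqrt (1 + c')"] conjI allI impI)
  show "C' * sqrt (1 + c') > 0" using assms by simp
  have nonneg: "0 \<le> C'" "0 \<le> c'" using assms by auto
  fix n m X Y \<rho> u v ku kv
  assume "m > 0 \<and> spiked_params n \<rho> u v ku kv \<and>
    event_E C' c' n m (sample_cross_cov m X Y) \<rho> u v ku kv"
  then have "0 < \<rho>" and E: "event_E C' c' n m (sample_cross_cov m X Y) \<rho> u v ku kv"
    unfolding spiked_params_def by auto
  show "sqrt (1 / struct_fun n u (card Su))
      - 2 * (C' * sqrt (1 + c')) * (1 + \<rho>) / (\<rho> * \<bar>inner_n n v vhat\<bar>)
        * sqrt ((real (card Su) + real (card Sv)) * ln (real n) / real m) \<le> sub_norm Su u"
    if "Sv \<subseteq> {..<n} \<and> card Sv \<le> kv \<and> supported_in Sv vhat \<and> sub_norm Sv vhat = 1 \<and>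
      inner_n n v vhat \<noteq> 0 \<and> p \<le> ku \<and>
      is_top_set n (\<lambda>i. \<Sum>j<n. sample_cross_cov m X Y i j * vhat j) p Su" for Sv vhat p Su
    using that by (intro sub_norm_top_set_ge[OF nonneg \<open>0 < \<rho>\<close> E]) auto
  show "sqrt (1 / struct_fun n v (card Sv))
      - 2 * (C' * sqrt (1 + c')) * (1 + \<rho>) / (\<rho> * \<bar>inner_n n u uhat\<bar>)
        * sqrt ((real (card Su) + real (card Sv)) * ln (real n) / real m) \<le> sub_norm Sv v"
    if "Su \<subseteq> {..<n} \<and> card Su \<le> ku \<and> supported_in Su uhat \<and> sub_norm Su uhat = 1 \<and>
      inner_n n u uhat \<noteq> 0 \<and> q \<le> kv \<and>
      is_top_set n (\<lambda>j. \<Sum>i<n. sample_cross_cov m X Y i j * uhat i) q Sv" for Su uhat q Sv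
    using that sub_norm_top_set_ge[OF nonneg \<open>0 < \<rho>\<close> event_E_transpose[OF E],
      where Sv = Su and vhat = uhat and p = q and Su = Sv]
    by (simp add: add.commute)
qed

end
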